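(* Let $p$ be a prime, let $n,d\in\mathbb{Z}_{\ge1}$ and let $\tilde R\in\mathbb{P}^d(\mathbb{Z}/p^n\mathbb{Z})$. Let $v=(r_0,\dots,r_d)\in\mathbb{Z}^{d+1}\setminus\{0\}$ be primitive, i.e. $\gcd(r_0,\dots,r_d)=1$, such that $R=(r_0:\dots:r_d)\in\mathbb{P}^d(\mathbb{Q})$ reduces to $\tilde R$ modulo $p^n$. Then the lattice $L\subset\mathbb{Z}^{d+1}$ generated by $\{v\}\cup\{p^ne_i:0\le i\le d\}$ contains every vector $w\in\mathbb{Z}^{d+1}\setminus\{0\}$ such that the corresponding point of $\mathbb{P}^d(\mathbb{Q})$ reduces modulo $p^n$ to $\tilde R$. Moreover, if $u=a_0v+p^n(a_1e_0+a_2e_1+\cdots+a_{d+1}e_d)\in L$ with $a_0,\dots,a_{d+1}\in\mathbb{Z}$ and $p\nmid a_0$, then the point of $\mathbb{P}^d(\mathbb{Q})$ with coordinate vector $u$ reduces modulo $p^n$ to $\tilde R$.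
   Context: $e_0,\dots,e_d$ is the standard basis of $\mathbb{Z}^{d+1}$. The reduction of a point of $\mathbb{P}^d(\mathbb{Q})$ modulo $p^n$ is obtained by reducing a primitive integer coordinate vector modulo $p^n$. *)

theory Defs
  imports "HOL-Computational_Algebra.Primes" "HOL-Number_Theory.Cong"
begin

text \<open>Integer vectors in Z^(d+1) are functions nat => int with coordinates 0..d,
  vanishing at indices > d.\<close>
definition zvec :: "nat \<Rightarrow> (nat \<Rightarrow> int) set" where
  "zvec d = {x. \<forall>i>d. x i = 0}"

definition std_basis :: "nat \<Rightarrow> nat \<Rightarrow> int" where
  "std_basis i = (\<lambda>j. if j = i then 1 else 0)"

definition primitive_vec :: "nat \<Rightarrow> (nat \<Rightarrow> int) \<Rightarrow> bool" where
  "primitive_vec d v \<longleftrightarrow> Gcd (v ` {..d}) = 1"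

text \<open>The point of P^d(Z/p^n Z) represented by an integer vector x (taken mod p^n):
  the class of all integer lifts y of vectors that are unit multiples of x mod p^n.\<close>
definition proj_class :: "int \<Rightarrow> nat \<Rightarrow> nat \<Rightarrow> (nat \<Rightarrow> int) \<Rightarrow> (nat \<Rightarrow> int) set" where
  "proj_class p n d x =
     {y \<in> zvec d. \<exists>c::int. coprime c p \<and> (\<forall>i\<le>d. [y i = c * x i] (mod p ^ n))}"

definition proj_space :: "int \<Rightarrow> nat \<Rightarrow> nat \<Rightarrow> (nat \<Rightarrow> int) set set" where
  "proj_space p n d = {proj_class p n d x | x. x \<in> zvec d \<and> (\<exists>i\<le>d. \<not> p dvd x i)}"

text \<open>The point of P^d(Q) with nonzero integer coordinate vector w reduces modulo p^n
  to Rt: some primitive integer coordinate vector of the same rational point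
  reduces mod p^n to Rt.\<close>
definition reduces_to :: "int \<Rightarrow> nat \<Rightarrow> nat \<Rightarrow> (nat \<Rightarrow> int) \<Rightarrow> (nat \<Rightarrow> int) set \<Rightarrow> bool" where
  "reduces_to p n d w Rt \<longleftrightarrow>
     (\<exists>v'. v' \<in> zvec d \<and> primitive_vec d v' \<and>
        (\<exists>a b::int. a \<noteq> 0 \<and> b \<noteq> 0 \<and> (\<forall>i\<le>d. a * v' i = b * w i)) \<and>
        proj_class p n d v' = Rt)"

definition lattice_gen :: "(nat \<Rightarrow> int) list \<Rightarrow> (nat \<Rightarrow> int) set" where
  "lattice_gen gs = {(\<lambda>j. \<Sum>k<length gs. c k * (gs ! k) j) | c. True}"

end

theory Submission
  imports Defs
begin

text \<open>A primitive representative of a point reducing to the class of v is congruent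
  modulo p^n to a unit multiple of v; since every integer coordinate vector of the point is an
  integer multiple of its primitive representative, it is congruent to a multiple of v, which is
  exactly membership in the lattice. Conversely, u is congruent to the unit multiple a_0 v, and
  the gcd of the coordinates of u is prime to p because some coordinate of v is; dividing u by
  that gcd gives a primitive vector in the class of v.\<close>

lemma sum_mult_std_basis:
  fixes f :: "nat \<Rightarrow> int"
  assumes "finite A"
  shows "(\<Sum>i\<in>A. f i * std_basis i j) = (if j \<in> A then f j else 0)"
  using assms by (simp add: std_basis_def if_distrib sum.delta' cong: if_cong)

lemma lattice_gen_Cons_scaled_basis:
  "lattice_gen (v # map (\<lambda>i j. q * std_basis i j) [0..<d+1]) =
     {\<lambda>j. c * v j + q * (if j \<le> d then r j else 0) | c r. True}"
proof -
  let ?gs = "v # map (\<lambda>i j. q * std_basis i j) [0..<d+1]"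
  have comb: "(\<Sum>k<length ?gs. c k * (?gs ! k) j) =
      c 0 * v j + q * (if j \<le> d then c (Suc j) else 0)" for c j
  proof -
    have "(\<Sum>k<length ?gs. c k * (?gs ! k) j) = c 0 * v j + (\<Sum>k<d+1. c (Suc k) * (?gs ! Suc k) j)"
      by (simp only: length_Cons length_map length_upt diff_zero sum.lessThan_Suc_shift) simp
    also have "\<dots> = c 0 * v j + (\<Sum>k<d+1. c (Suc k) * (q * std_basis k j))"
      by (intro arg_cong2[where f = "(+)"] refl sum.cong) (simp_all del: upt_Suc)
    also have "\<dots> = c 0 * v j + q * (\<Sum>k<d+1. c (Suc k) * std_basis k j)"
      by (simp add: sum_distrib_left mult.left_commute del: sum.lessThan_Suc)
    also have "\<dots> = c 0 * v j + q * (if j \<le> d then c (Suc j) else 0)"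
      by (subst sum_mult_std_basis) auto
    finally show ?thesis .
  qed
  show ?thesis
  proof (intro equalityI subsetI)
    fix w assume "w \<in> lattice_gen ?gs"
    then obtain c where "w = (\<lambda>j. \<Sum>k<length ?gs. c k * (?gs ! k) j)"
      unfolding lattice_gen_def by blast
    then have "w = (\<lambda>j. c 0 * v j + q * (if j \<le> d then c (Suc j) else 0))"
      by (simp only: comb)
    then show "w \<in> {\<lambda>j. c * v j + q * (if j \<le> d then r j else 0) | c r. True}"
      by (intro CollectI exI[of _ "c 0"] exI[of _ "\<lambda>j. c (Suc j)"]) simp
  next
    fix w assume "w \<in> {\<lambda>j. c * v j + q * (if j \<le> d then r j else 0) | c r. True}"
    then obtain c r where w: "w = (\<lambda>j. c * v j + q * (if j \<le> d then r j else 0))" by blast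
    define cs where "cs k = (if k = 0 then c else r (k - 1))" for k
    have "w = (\<lambda>j. \<Sum>k<length ?gs. cs k * (?gs ! k) j)"
      unfolding comb by (simp add: w cs_def fun_eq_iff)
    then show "w \<in> lattice_gen ?gs" unfolding lattice_gen_def by blast
  qed
qed

lemma mem_lattice_gen_if_cong_multiple:
  assumes "v \<in> zvec d" "w \<in> zvec d" "\<forall>i\<le>d. [w i = c * v i] (mod q)"
  shows "w \<in> lattice_gen (v # map (\<lambda>i j. q * std_basis i j) [0..<d+1])"
proof -
  have "\<forall>i\<le>d. \<exists>t. w i = c * v i + q * t"
    using assms(3) by (metis cong_iff_lin cong_sym)
  then obtain r where r: "\<forall>i\<le>d. w i = c * v i + q * r i" by metis
  have "w = (\<lambda>j. c * v j + q * (if j \<le> d then r j else 0))"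
    using r assms(1,2) by (auto simp: zvec_def)
  then show ?thesis unfolding lattice_gen_Cons_scaled_basis by blast
qed

lemma proj_class_subset_if_cong:
  fixes p c :: int
  assumes "coprime c p" "\<forall>i\<le>d. [x i = c * y i] (mod p ^ n)"
  shows "proj_class p n d x \<subseteq> proj_class p n d y"
proof
  fix z assume "z \<in> proj_class p n d x"
  then obtain e where z: "z \<in> zvec d" "coprime e p" "\<forall>i\<le>d. [z i = e * x i] (mod p ^ n)"
    unfolding proj_class_def by blast
  have "[z i = (e * c) * y i] (mod p ^ n)" if "i \<le> d" for i
  proof -
    have "[z i = e * x i] (mod p ^ n)" using z(3) that by blast
    also have "[e * x i = e * (c * y i)] (mod p ^ n)" using assms(2) that cong_scalar_left by blast
    finally show ?thesis by (simp add: mult.assoc)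
  qed
  moreover have "coprime (e * c) p" using z(2) assms(1) by simp
  ultimately show "z \<in> proj_class p n d y" using z(1) unfolding proj_class_def by blast
qed

lemma proj_class_eq_if_cong:
  fixes p c :: int
  assumes "coprime c p" "\<forall>i\<le>d. [x i = c * y i] (mod p ^ n)" "n \<ge> 1"
  shows "proj_class p n d x = proj_class p n d y"
proof
  obtain c' where c': "[c * c' = 1] (mod p ^ n)"
    using cong_solve_coprime_int assms(1) by (metis coprime_power_right_iff)
  have "coprime (c * c') (p ^ n)"
    using c' by (metis cong_imp_coprime cong_sym coprime_1_left)
  then have "coprime c' p" using assms(3) by simp
  moreover have "[y i = c' * x i] (mod p ^ n)" if "i \<le> d" for i
  proof -
    have "[c' * x i = c' * (c * y i)] (mod p ^ n)"
      using assms(2) that cong_scalar_left by blast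
    also have "c' * (c * y i) = (c * c') * y i" by simp
    also have "[(c * c') * y i = 1 * y i] (mod p ^ n)"
      using c' cong_scalar_right by blast
    finally show ?thesis by (simp add: cong_sym)
  qed
  ultimately show "proj_class p n d y \<subseteq> proj_class p n d x"
    using proj_class_subset_if_cong[of c' p d y x n] by blast
qed (rule proj_class_subset_if_cong[OF assms(1,2)])

lemma proj_class_self: "x \<in> zvec d \<Longrightarrow> x \<in> proj_class p n d x"
  unfolding proj_class_def by (auto intro!: exI[of _ 1])

lemma primitive_vec_common_divisor_unit:
  fixes m :: int
  assumes "primitive_vec d v" "\<forall>i\<le>d. m dvd v i"
  shows "is_unit m"
proof -
  have "m dvd Gcd (v ` {..d})" using assms(2) by (auto simp: dvd_Gcd_iff)
  then show ?thesis using assms(1) by (simp add: primitive_vec_def)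
qed

lemma primitive_vec_ex_not_dvd:
  fixes p :: int
  assumes "prime p" "primitive_vec d v"
  obtains i where "i \<le> d" "\<not> p dvd v i"
  using primitive_vec_common_divisor_unit[OF assms(2), of p] assms(1) not_prime_unit by blast

text \<open>b divides a times the gcd of the coordinates of v, which is a.\<close>
lemma proportional_to_primitive_vec:
  fixes a b :: int
  assumes "primitive_vec d v" "b \<noteq> 0" "\<forall>i\<le>d. a * v i = b * w i"
  obtains m where "\<forall>i\<le>d. w i = m * v i"
proof -
  have "b dvd Gcd ((*) a ` (v ` {..d}))"
    using assms(3) by (auto simp: dvd_Gcd_iff)
  then have "b dvd a" using assms(1) by (simp add: Gcd_mult primitive_vec_def)
  then obtain m where m: "a = b * m" by blast
  have "w i = m * v i" if "i \<le> d" for i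
    using assms(2,3) that by (simp add: m mult.assoc)
  then show ?thesis using that by blast
qed

lemma primitive_vec_div_Gcd:
  fixes u :: "nat \<Rightarrow> int" and d :: nat
  defines "g \<equiv> Gcd (u ` {..d})"
  assumes "g \<noteq> 0"
  shows "primitive_vec d (\<lambda>j. if j \<le> d then u j div g else 0)" (is "primitive_vec d ?v")
proof -
  have "g * ?v i = u i" if "i \<le> d" for i
    using that by (simp add: g_def Gcd_dvd)
  then have "(*) g ` (?v ` {..d}) = u ` {..d}" by (force simp: image_image)
  then have "g = normalize (g * Gcd (?v ` {..d}))"
    using Gcd_mult[of g "?v ` {..d}"] by (simp add: g_def)
  moreover have "g \<ge> 0" "Gcd (?v ` {..d}) \<ge> 0" unfolding g_def by (metis Gcd_int_greater_eq_0)+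
  ultimately have "g = g * Gcd (?v ` {..d})" by simp
  then show ?thesis using assms(2) by (simp add: primitive_vec_def)
qed

lemma reduces_to_primitive_vec_iff:
  assumes "v \<in> zvec d" "primitive_vec d v" "n \<ge> 1"
  shows "reduces_to p n d v Rt \<longleftrightarrow> Rt = proj_class p n d v"
proof
  assume "reduces_to p n d v Rt"
  then obtain v' a b where v': "primitive_vec d v'" "b \<noteq> 0"
      "\<forall>i\<le>d. a * v' i = b * v i" "proj_class p n d v' = Rt"
    unfolding reduces_to_def by blast
  obtain m where m: "\<forall>i\<le>d. v i = m * v' i"
    using v'(1-3) by (rule proportional_to_primitive_vec)
  then have "is_unit m" using primitive_vec_common_divisor_unit[OF assms(2)] by simp
  then have "coprime m p" by (simp add: is_unit_left_imp_coprime)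
  then have "proj_class p n d v = proj_class p n d v'"
    using proj_class_eq_if_cong[OF _ _ assms(3)] m by (simp add: cong_refl)
  then show "Rt = proj_class p n d v" by (simp add: v'(4))
next
  assume "Rt = proj_class p n d v"
  then show "reduces_to p n d v Rt"
    unfolding reduces_to_def using assms(1,2) by (intro exI[of _ v] conjI exI[of _ 1]) auto
qed

lemma reduces_to_imp_cong_multiple:
  assumes "reduces_to p n d w (proj_class p n d v)"
  obtains c where "\<forall>i\<le>d. [w i = c * v i] (mod p ^ n)"
proof -
  obtain v' a b where v': "v' \<in> zvec d" "primitive_vec d v'" "b \<noteq> 0"
      "\<forall>i\<le>d. a * v' i = b * w i" "proj_class p n d v' = proj_class p n d v"
    using assms unfolding reduces_to_def by blast
  obtain k where k: "\<forall>i\<le>d. w i = k * v' i" using v'(2-4) by (rule proportional_to_primitive_vec)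
  have "v' \<in> proj_class p n d v" using proj_class_self[OF v'(1), of p n] v'(5) by simp
  then obtain c where c: "\<forall>i\<le>d. [v' i = c * v i] (mod p ^ n)" unfolding proj_class_def by blast
  have "[w i = (k * c) * v i] (mod p ^ n)" if "i \<le> d" for i
  proof -
    have "[k * v' i = k * (c * v i)] (mod p ^ n)" using c that by (simp add: cong_scalar_left)
    then show ?thesis using k that by (simp add: mult.assoc)
  qed
  then show ?thesis using that by blast
qed

text \<open>The gcd of the coordinates of u is prime to p, so dividing u by it stays in the class.\<close>
lemma reduces_to_if_cong_unit_multiple:
  fixes p :: int
  assumes "prime p" "n \<ge> 1" "primitive_vec d v"
    and "\<not> p dvd c" "\<forall>i\<le>d. [u i = c * v i] (mod p ^ n)"
  shows "reduces_to p n d u (proj_class p n d v)"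
proof -
  obtain i0 where i0: "i0 \<le> d" "\<not> p dvd v i0"
    using assms(1,3) by (rule primitive_vec_ex_not_dvd)
  have "p dvd p ^ n" using assms(2) by (simp add: dvd_power)
  then have "[u i0 = c * v i0] (mod p)"
    using assms(5) i0(1) cong_dvd_modulus by blast
  then have u_i0: "\<not> p dvd u i0"
    using assms(1,4) i0(2) by (metis cong_dvd_iff prime_dvd_mult_iff)
  define g where "g = Gcd (u ` {..d})"
  define v' where "v' j = (if j \<le> d then u j div g else 0)" for j
  have p_g: "\<not> p dvd g"
    using u_i0 i0(1) unfolding g_def by (meson Gcd_dvd atMost_iff dvd_trans image_eqI)
  then have g: "g \<noteq> 0" "coprime g p"
    using prime_imp_coprime[OF assms(1) p_g] by (auto simp: coprime_commute)
  have "primitive_vec d v'"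
    unfolding v'_def g_def by (rule primitive_vec_div_Gcd) (use g(1) g_def in simp)
  moreover have u_v': "\<forall>i\<le>d. g * v' i = u i"
    by (simp add: v'_def g_def Gcd_dvd)
  moreover have "proj_class p n d v' = proj_class p n d v"
  proof -
    have "coprime c p" using assms(1,4) by (metis prime_imp_coprime coprime_commute)
    then have "proj_class p n d u = proj_class p n d v"
      using assms(5,2) by (rule proj_class_eq_if_cong)
    moreover have "proj_class p n d u = proj_class p n d v'"
      using proj_class_eq_if_cong[OF g(2) _ assms(2)] u_v' by (simp add: cong_refl)
    ultimately show ?thesis by simp
  qed
  ultimately show ?thesis
    unfolding reduces_to_def using g(1)
    by (intro exI[of _ v'] conjI exI[of _ g] exI[of _ 1]) (auto simp: v'_def zvec_def)
qed

theorem lemma3p11: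
  fixes p :: int and n d :: nat and Rt :: "(nat \<Rightarrow> int) set" and v :: "nat \<Rightarrow> int"
  assumes "prime p" and "n \<ge> 1" and "d \<ge> 1"
    and "Rt \<in> proj_space p n d"
    and "v \<in> zvec d" and "v \<noteq> (\<lambda>_. 0)" and "primitive_vec d v"
    and "reduces_to p n d v Rt"
  shows "(\<forall>w \<in> zvec d. w \<noteq> (\<lambda>_. 0) \<and> reduces_to p n d w Rt \<longrightarrow>
            w \<in> lattice_gen (v # map (\<lambda>i. (\<lambda>j. p ^ n * std_basis i j)) [0..<d+1]))
       \<and> (\<forall>a :: nat \<Rightarrow> int. \<not> p dvd a 0 \<longrightarrow>
            reduces_to p n d
              (\<lambda>j. a 0 * v j + p ^ n * (\<Sum>i\<le>d. a (i+1) * std_basis i j)) Rt)"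
proof -
  have Rt: "Rt = proj_class p n d v"
    using assms(8) reduces_to_primitive_vec_iff[OF assms(5,7,2)] by blast
  have "w \<in> lattice_gen (v # map (\<lambda>i j. p ^ n * std_basis i j) [0..<d+1])"
    if w: "w \<in> zvec d" and red: "reduces_to p n d w Rt" for w
  proof -
    obtain c where "\<forall>i\<le>d. [w i = c * v i] (mod p ^ n)"
      using red unfolding Rt by (rule reduces_to_imp_cong_multiple)
    then show ?thesis by (rule mem_lattice_gen_if_cong_multiple[OF assms(5) w])
  qed
  moreover have "reduces_to p n d (\<lambda>j. a 0 * v j + p ^ n * (\<Sum>i\<le>d. a (i+1) * std_basis i j)) Rt"
    if a0: "\<not> p dvd a 0" for a :: "nat \<Rightarrow> int"
  proof -
    have "\<forall>j\<le>d. [a 0 * v j + p ^ n * (\<Sum>i\<le>d. a (i+1) * std_basis i j) = a 0 * v j] (mod p ^ n)"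
      by (simp add: cong_iff_dvd_diff)
    then show ?thesis
      unfolding Rt by (rule reduces_to_if_cong_unit_multiple[OF assms(1,2,7) a0])
  qed
  ultimately show ?thesis by blast
qed

end
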